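(* Let $\Gamma$ be a telescopic numerical semigroup minimally generated by $r_0<r_1<\cdots<r_h$. If $h\ge 2$, then $r_h\ge 2^{h+1}-1$.
   Context: A numerical semigroup is a submonoid of $(\mathbb N,+)$ with finite complement in $\mathbb N$; it has a unique minimal generating system. $\langle X\rangle$ is the submonoid generated by $X$. For an arrangement $(r_0,\ldots,r_h)$ of the minimal generators, set $d_k=\gcd(r_0,\ldots,r_{k-1})$ for $k=1,\ldots,h+1$. Gluing: a set $A$ of positive integers with nontrivial partition $A=A_1\cup A_2$ is the gluing of $A_1$ and $A_2$ if $\mathrm{lcm}(\gcd A_1,\gcd A_2)\in\langle A_1\rangle\cap\langle A_2\rangle$. $\Gamma$ is free for the arrangement $(r_0,\ldots,r_h)$ if $h=0$, or $h\ge1$, $\{r_0,\ldots,r_h\}$ is the gluing of $\{r_0,\ldots,r_{h-1}\}$ and $\{r_h\}$, and $\langle r_0/d_h,\ldots,r_{h-1}/d_h\rangle$ is free for the arrangement $(r_0/d_h,\ldots,r_{h-1}/d_h)$. $\Gamma$ is telescopic if it is free for the arrangement of its minimal generators in increasing order $r_0<\cdots<r_h$. *)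

theory Defs
  imports Main
begin

inductive_set monoid_gen :: "nat set \<Rightarrow> nat set" for X :: "nat set" where
  zero: "0 \<in> monoid_gen X"
| add: "a \<in> X \<Longrightarrow> x \<in> monoid_gen X \<Longrightarrow> a + x \<in> monoid_gen X"

definition numerical_semigroup :: "nat set \<Rightarrow> bool" where
  "numerical_semigroup S \<longleftrightarrow> 0 \<in> S \<and> (\<forall>x\<in>S. \<forall>y\<in>S. x + y \<in> S) \<and> finite (UNIV - S)"

definition minimal_gens :: "nat set \<Rightarrow> bool" where
  "minimal_gens G \<longleftrightarrow> (\<forall>g\<in>G. g \<notin> monoid_gen (G - {g}))"

definition minimal_generating_system :: "nat set \<Rightarrow> nat set \<Rightarrow> bool" where
  "minimal_generating_system S G \<longleftrightarrow> monoid_gen G = S \<and> minimal_gens G"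

definition gluing :: "nat set \<Rightarrow> nat set \<Rightarrow> nat set \<Rightarrow> bool" where
  "gluing A A1 A2 \<longleftrightarrow> (\<forall>a\<in>A. 0 < a) \<and> A = A1 \<union> A2 \<and> A1 \<inter> A2 = {} \<and> A1 \<noteq> {} \<and> A2 \<noteq> {}
     \<and> lcm (Gcd A1) (Gcd A2) \<in> monoid_gen A1 \<inter> monoid_gen A2"

(* <set rs> is free for the arrangement rs = [r_0,...,r_h] of its minimal generators;
   d_h = gcd(r_0,...,r_{h-1}) = Gcd (set (butlast rs)) *)
function free_arr :: "nat list \<Rightarrow> bool" where
  "free_arr rs \<longleftrightarrow> rs \<noteq> [] \<and> distinct rs \<and> minimal_gens (set rs) \<and>
     (if length rs \<le> 1 then True else
       (gluing (set rs) (set (butlast rs)) {last rs} \<and>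
        free_arr (map (\<lambda>x. x div Gcd (set (butlast rs))) (butlast rs))))"
  by auto
termination
  by (relation "measure length") auto

definition telescopic :: "nat set \<Rightarrow> nat list \<Rightarrow> bool" where
  "telescopic S rs \<longleftrightarrow> numerical_semigroup S \<and> sorted_wrt (<) rs
     \<and> minimal_generating_system S (set rs) \<and> free_arr rs"

end

theory Submission
  imports Defs
begin

text \<open>Peel off the last generator: for telescopic \<open>r\<^sub>0 < \<dots> < r\<^sub>h\<close> the gluing condition
  forces \<open>d\<^sub>h = gcd(r\<^sub>0, \<dots>, r\<^sub>h\<^sub>-\<^sub>1) \<ge> 2\<close>, since \<open>d\<^sub>h = 1\<close> would put \<open>lcm(d\<^sub>h, r\<^sub>h) = r\<^sub>h\<close>
  into the monoid generated by the other generators, contradicting minimality.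
  The quotient arrangement \<open>r\<^sub>i / d\<^sub>h\<close> (\<open>i < h\<close>) is again free and increasing, so by
  induction \<open>r\<^sub>h\<^sub>-\<^sub>1 / d\<^sub>h \<ge> 2\<^sup>h - 1\<close>, whence \<open>r\<^sub>h > r\<^sub>h\<^sub>-\<^sub>1 \<ge> 2 (2\<^sup>h - 1)\<close>.
  The base case \<open>r\<^sub>0 \<ge> 1\<close> holds because \<open>0\<close> is never a minimal generator.\<close>

declare free_arr.simps[simp del]

lemma minimal_gens_pos:
  assumes "minimal_gens G" and "g \<in> G"
  shows "0 < g"
  using assms monoid_gen.zero unfolding minimal_gens_def by (metis gr0I)

lemma free_arr_distinct_minimal_gens:
  assumes "free_arr rs"
  shows "distinct rs" "minimal_gens (set rs)"
  using assms free_arr.simps[of rs] by auto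

lemma free_arr_step:
  assumes "free_arr rs" and "2 \<le> length rs"
  shows "gluing (set rs) (set (butlast rs)) {last rs}"
    and "free_arr (map (\<lambda>x. x div Gcd (set (butlast rs))) (butlast rs))"
  using assms free_arr.simps[of rs] by auto

lemma free_arr_Gcd_butlast_ge_2:
  assumes "free_arr rs" and "2 \<le> length rs"
  shows "2 \<le> Gcd (set (butlast rs))"
proof -
  define bs l d where "bs = butlast rs" and "l = last rs" and "d = Gcd (set bs)"
  have "rs \<noteq> []" using assms(2) by auto
  then have rs: "rs = bs @ [l]" unfolding bs_def l_def by simp
  have glue: "gluing (set rs) (set bs) {l}"
    using free_arr_step(1)[OF assms] unfolding bs_def l_def .
  have "l \<notin> monoid_gen (set rs - {l})"
    using free_arr_distinct_minimal_gens(2)[OF assms(1)] rs unfolding minimal_gens_def by simp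
  moreover have "set rs - {l} = set bs"
    using free_arr_distinct_minimal_gens(1)[OF assms(1)] rs by auto
  ultimately have l_not_gen: "l \<notin> monoid_gen (set bs)" by simp
  have "lcm d l \<in> monoid_gen (set bs)"
    using glue unfolding gluing_def d_def by simp
  with l_not_gen have "d \<noteq> 1" by auto
  moreover have "d \<noteq> 0"
  proof -
    have "bs \<noteq> []"
      using assms(2) rs by auto
    then have "hd bs \<in> set bs" by simp
    moreover have "\<forall>b\<in>set bs. 0 < b"
      using glue unfolding gluing_def by (simp add: rs)
    ultimately have "d dvd hd bs" "0 < hd bs"
      unfolding d_def by auto
    then show ?thesis by auto
  qed
  ultimately show ?thesis unfolding d_def bs_def by linarith
qed

lemma sorted_wrt_less_map_div:
  fixes xs :: "nat list"
  assumes "sorted_wrt (<) xs" and "\<And>x. x \<in> set xs \<Longrightarrow> d dvd x" and "0 < d"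
  shows "sorted_wrt (<) (map (\<lambda>x. x div d) xs)"
  unfolding sorted_wrt_map
proof (rule sorted_wrt_mono_rel[OF _ assms(1)])
  fix x y assume "x \<in> set xs" "y \<in> set xs" "x < y"
  with assms(2,3) show "x div d < y div d"
    by (metis dvd_div_mult_self mult_less_cancel2)
qed

lemma free_arr_nth_ge:
  assumes "free_arr rs" and "sorted_wrt (<) rs" and "length rs = h + 1"
  shows "2 ^ (h + 1) - 1 \<le> rs ! h"
  using assms
proof (induction h arbitrary: rs)
  case 0
  then have "rs ! 0 \<in> set rs" by simp
  then have "0 < rs ! 0"
    using minimal_gens_pos free_arr_distinct_minimal_gens(2) "0.prems"(1) by blast
  then show ?case by simp
next
  case (Suc k)
  define bs d where "bs = butlast rs" and "d = Gcd (set bs)"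
  define cs where "cs = map (\<lambda>x. x div d) bs"
  have len: "2 \<le> length rs" "length bs = k + 1"
    using Suc.prems(3) unfolding bs_def by simp_all
  have d: "2 \<le> d"
    using free_arr_Gcd_butlast_ge_2[OF Suc.prems(1) len(1)] unfolding d_def bs_def .
  have bs_sorted: "sorted_wrt (<) bs"
    using Suc.prems(2) unfolding bs_def by (metis sorted_wrt_take butlast_conv_take)
  have "free_arr cs"
    using free_arr_step(2)[OF Suc.prems(1) len(1)] unfolding cs_def d_def bs_def .
  moreover have "sorted_wrt (<) cs"
    unfolding cs_def using sorted_wrt_less_map_div[OF bs_sorted] d by (simp add: d_def)
  ultimately have IH: "2 ^ (k + 1) - 1 \<le> bs ! k div d"
    using Suc.IH[of cs] len(2) unfolding cs_def by simp
  have "bs ! k = d * (bs ! k div d)"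
    using len(2) unfolding d_def by simp
  also have "\<dots> \<ge> 2 * (2 ^ (k + 1) - 1)"
    using mult_le_mono[OF d IH] .
  finally have "2 ^ (k + 2) - 2 \<le> bs ! k"
    by (simp add: right_diff_distrib')
  moreover have "bs ! k < rs ! Suc k"
    using Suc.prems(2,3) unfolding bs_def by (simp add: nth_butlast sorted_wrt_iff_nth_less)
  ultimately show ?case
    by (simp add: algebra_simps)
qed

theorem proposition4p1:
  fixes S :: "nat set" and rs :: "nat list" and h :: nat
  assumes "telescopic S rs"
    and "length rs = h + 1"
    and "h \<ge> 2"
  shows "rs ! h \<ge> 2 ^ (h + 1) - 1"
  using free_arr_nth_ge[of rs h] assms unfolding telescopic_def by simp

end
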